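(* Let $a\ge b\ge2$ and $k$ be integers with $2a+3\le k\le 2a+2b-1$. Then for every $(i,j)\in Q_1$: - $w_1,w_4,w_5\in\mathcal{R}^k_{(a,b),(i,j)}$; - if moreover $b\ge\lceil a/2\rceil+2$ and $2a+3\le k\le a+2b-1$, then also $w_6\in\mathcal{R}^k_{(a,b),(i,j)}$.
   Context: $\widehat{\mathfrak{su}}(3)_k$ fusion. Let $P_+^k=\{(\lambda_1,\lambda_2)\in\mathbb{Z}_{\ge0}^2:\lambda_1+\lambda_2\le k\}$. For $\lambda,\mu,\nu\in P_+^k$ set - $\mathcal{A}=\tfrac13[2(\lambda_1+\mu_1+\nu_2)+\lambda_2+\mu_2+\nu_1]$, - $\mathcal{B}=\tfrac13[\lambda_1+\mu_1+\nu_2+2(\lambda_2+\mu_2+\nu_1)]$, - $k_0^{\max}=\min(\mathcal{A},\mathcal{B})$, - $k_0^{\min}=\max(\lambda_1+\lambda_2,\mu_1+\mu_2,\nu_1+\nu_2,\mathcal{A}-\lambda_1,\mathcal{A}-\mu_1,\mathcal{A}-\nu_2,\mathcal{B}-\lambda_2,\mathcal{B}-\mu_2,\mathcal{B}-\nu_1)$. The fusion multiplicity is $N^{(k)\nu}_{\lambda,\mu}=\min(k_0^{\max},k)-k_0^{\min}+1$ if $\mathcal{A},\mathcal{B}$ are nonnegative integers, $k_0^{\max}\ge k_0^{\min}$ and $k\ge k_0^{\min}$; otherwise it is $0$. The set $\mathcal{R}^k_{\lambda,\mu}$ is $\{\nu\in P_+^k:N^{(k)\nu}_{\lambda,\mu}\ne0\}$.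 The candidate weights are $w_1=(a-1,b+2)$, $w_2=(a+2,b-1)$, $w_3=(a+1,b-2)$, $w_4=(a-2,b+1)$, $w_5=(a+1,b+1)$, $w_6=(a-1,b-1)$. The set $Q_1$ is defined by $Q_1=\{(2k-3p,3p-k):p\in\mathbb{Z},\ \lceil(k+1)/2\rceil\le p\le\min(a+b,k-a-1,\lfloor2k/3\rfloor,\lfloor(b+k)/2\rfloor)\}$. *)

theory Defs
  imports Complex_Main
begin

type_synonym wt = "int \<times> int"

definition Pplus :: "int \<Rightarrow> wt set" where
  "Pplus k = {(l1, l2). 0 \<le> l1 \<and> 0 \<le> l2 \<and> l1 + l2 \<le> k}"

definition calA :: "wt \<Rightarrow> wt \<Rightarrow> wt \<Rightarrow> rat" where
  "calA lam mu nu = (2 * of_int (fst lam + fst mu + snd nu) + of_int (snd lam + snd mu + fst nu)) / 3"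

definition calB :: "wt \<Rightarrow> wt \<Rightarrow> wt \<Rightarrow> rat" where
  "calB lam mu nu = (of_int (fst lam + fst mu + snd nu) + 2 * of_int (snd lam + snd mu + fst nu)) / 3"

definition k0max :: "wt \<Rightarrow> wt \<Rightarrow> wt \<Rightarrow> rat" where
  "k0max lam mu nu = min (calA lam mu nu) (calB lam mu nu)"

definition k0min :: "wt \<Rightarrow> wt \<Rightarrow> wt \<Rightarrow> rat" where
  "k0min lam mu nu = (let A = calA lam mu nu; B = calB lam mu nu in
     Max {of_int (fst lam + snd lam), of_int (fst mu + snd mu), of_int (fst nu + snd nu),
          A - of_int (fst lam), A - of_int (fst mu), A - of_int (snd nu),
          B - of_int (snd lam), B - of_int (snd mu), B - of_int (fst nu)})"

definition fusionN :: "int \<Rightarrow> wt \<Rightarrow> wt \<Rightarrow> wt \<Rightarrow> int" where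
  "fusionN k lam mu nu =
    (if lam \<in> Pplus k \<and> mu \<in> Pplus k \<and> nu \<in> Pplus k
        \<and> calA lam mu nu \<in> \<int> \<and> calB lam mu nu \<in> \<int>
        \<and> calA lam mu nu \<ge> 0 \<and> calB lam mu nu \<ge> 0
        \<and> k0max lam mu nu \<ge> k0min lam mu nu \<and> of_int k \<ge> k0min lam mu nu
     then \<lfloor>min (k0max lam mu nu) (of_int k) - k0min lam mu nu + 1\<rfloor>
     else 0)"

definition fusionR :: "int \<Rightarrow> wt \<Rightarrow> wt \<Rightarrow> wt set" where
  "fusionR k lam mu = {nu \<in> Pplus k. fusionN k lam mu nu \<noteq> 0}"

definition Q1 :: "int \<Rightarrow> int \<Rightarrow> int \<Rightarrow> wt set" where
  "Q1 a b k = {(2*k - 3*p, 3*p - k) | p.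
     \<lceil>of_int (k + 1) / (2::rat)\<rceil> \<le> p \<and>
     p \<le> min (min (a + b) (k - a - 1)) (min \<lfloor>of_int (2*k) / (3::rat)\<rfloor> \<lfloor>of_int (b + k) / (2::rat)\<rfloor>)}"

end

theory Submission
  imports Defs
begin

text \<open>Every point of \<open>Q\<^sub>1\<close> is \<open>(2k - 3p, 3p - k)\<close> for an integer \<open>p\<close> in an explicit range, and
  for each candidate weight the quantities \<open>\<A>\<close> and \<open>\<B>\<close> are then integers depending linearly
  on \<open>a, b, k, p\<close>. The fusion multiplicity is nonzero as soon as each of the nine lower bounds
  defining \<open>k\<^sub>0\<^sup>m\<^sup>i\<^sup>n\<close> is at most \<open>min(\<A>, \<B>, k)\<close>, and for these weights every such bound is a
  linear inequality that follows from the range of \<open>p\<close> and the hypotheses on \<open>a, b, k\<close>.\<close>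

lemma mem_fusionR_if_integral_bounds:
  fixes k A B l1 l2 m1 m2 n1 n2 :: int
  assumes weights: "(l1, l2) \<in> Pplus k" "(m1, m2) \<in> Pplus k" "(n1, n2) \<in> Pplus k"
    and A: "calA (l1, l2) (m1, m2) (n1, n2) = of_int A"
    and B: "calB (l1, l2) (m1, m2) (n1, n2) = of_int B"
    and nonneg: "0 \<le> A" "0 \<le> B"
    and bounds: "l1 + l2 \<le> min (min A B) k" "m1 + m2 \<le> min (min A B) k" "n1 + n2 \<le> min (min A B) k"
      "A - l1 \<le> min (min A B) k" "A - m1 \<le> min (min A B) k" "A - n2 \<le> min (min A B) k"
      "B - l2 \<le> min (min A B) k" "B - m2 \<le> min (min A B) k" "B - n1 \<le> min (min A B) k"
  shows "(n1, n2) \<in> fusionR k (l1, l2) (m1, m2)"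
proof -
  \<comment> \<open>Abstracting the minimum keeps the simplifier from case-splitting it nine times.\<close>
  define m where "m = min (min A B) k"
  let ?kmin = "k0min (l1, l2) (m1, m2) (n1, n2)"
  let ?kmax = "k0max (l1, l2) (m1, m2) (n1, n2)"
  have "\<forall>x \<in> {of_int (l1 + l2), of_int (m1 + m2), of_int (n1 + n2),
      of_int A - of_int l1, of_int A - of_int m1, of_int A - of_int n2,
      of_int B - of_int l2, of_int B - of_int m2, of_int B - of_int n1}. x \<le> (of_int m :: rat)"
    using bounds unfolding m_def[symmetric] by simp
  then have kmin_le: "?kmin \<le> of_int m"
    unfolding k0min_def Let_def A B fst_conv snd_conv by (subst Max_le_iff) auto
  have kmax: "?kmax = of_int (min A B)"
    unfolding k0max_def A B by simp
  have kmin_le_kmax: "?kmin \<le> ?kmax" and kmin_le_k: "?kmin \<le> of_int k"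
    using kmin_le unfolding kmax m_def by (simp_all add: min_le_iff_disj)
  have "1 \<le> min ?kmax (of_int k) - ?kmin + 1"
    using kmin_le_kmax kmin_le_k by simp
  then have "1 \<le> \<lfloor>min ?kmax (of_int k) - ?kmin + 1\<rfloor>"
    by (metis floor_mono floor_one)
  then have "fusionN k (l1, l2) (m1, m2) (n1, n2) \<noteq> 0"
    using weights nonneg kmin_le_kmax kmin_le_k unfolding fusionN_def A B
    by (simp only: if_True simp_thms Ints_of_int of_int_0_le_iff)
  then show ?thesis
    using weights unfolding fusionR_def by blast
qed

lemma ceiling_divide_le_iff:
  fixes x d p :: int
  assumes "0 < d"
  shows "\<lceil>of_int x / (of_int d :: rat)\<rceil> \<le> p \<longleftrightarrow> x \<le> d * p"
proof -
  have "of_int x / (of_int d :: rat) \<le> of_int p \<longleftrightarrow> (of_int x :: rat) \<le> of_int (d * p)"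
    using assms by (simp add: divide_le_eq mult.commute)
  then show ?thesis
    by (simp only: ceiling_le_iff of_int_le_iff)
qed

lemma le_floor_divide_iff:
  fixes x d p :: int
  assumes "0 < d"
  shows "p \<le> \<lfloor>of_int x / (of_int d :: rat)\<rfloor> \<longleftrightarrow> d * p \<le> x"
proof -
  have "of_int p \<le> of_int x / (of_int d :: rat) \<longleftrightarrow> (of_int (d * p) :: rat) \<le> of_int x"
    using assms by (simp add: le_divide_eq mult.commute)
  then show ?thesis
    by (simp only: le_floor_iff of_int_le_iff)
qed

lemma Q1_memE:
  assumes "(i, j) \<in> Q1 a b k"
  obtains p where "i = 2 * k - 3 * p" "j = 3 * p - k"
    and "k + 1 \<le> 2 * p" "p \<le> a + b" "p \<le> k - a - 1" "3 * p \<le> 2 * k" "2 * p \<le> b + k"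
proof -
  obtain p where ij: "(i, j) = (2 * k - 3 * p, 3 * p - k)"
    and lower: "\<lceil>of_int (k + 1) / (2::rat)\<rceil> \<le> p"
    and upper: "p \<le> min (min (a + b) (k - a - 1))
                      (min \<lfloor>of_int (2 * k) / (3::rat)\<rfloor> \<lfloor>of_int (b + k) / (2::rat)\<rfloor>)"
    using assms unfolding Q1_def by blast
  have "k + 1 \<le> 2 * p"
    using lower ceiling_divide_le_iff[where d = 2 and x = "k + 1"] by simp
  moreover have "3 * p \<le> 2 * k" "2 * p \<le> b + k"
    using upper le_floor_divide_iff[where d = 3 and x = "2 * k"]
      le_floor_divide_iff[where d = 2 and x = "b + k"] by simp_all
  ultimately show ?thesis
    using that ij upper by simp
qed

theorem mainTheorem7:
  fixes a b k :: int
  assumes "a \<ge> b" and "b \<ge> 2"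
    and "2*a + 3 \<le> k" and "k \<le> 2*a + 2*b - 1"
  shows "\<forall>(i, j) \<in> Q1 a b k.
           (a - 1, b + 2) \<in> fusionR k (a, b) (i, j) \<and>
           (a - 2, b + 1) \<in> fusionR k (a, b) (i, j) \<and>
           (a + 1, b + 1) \<in> fusionR k (a, b) (i, j) \<and>
           (b \<ge> \<lceil>of_int a / (2::rat)\<rceil> + 2 \<and> 2*a + 3 \<le> k \<and> k \<le> a + 2*b - 1
              \<longrightarrow> (a - 1, b - 1) \<in> fusionR k (a, b) (i, j))"
proof (clarify)
  fix i j assume "(i, j) \<in> Q1 a b k"
  then obtain p where ij: "i = 2 * k - 3 * p" "j = 3 * p - k"
    and p: "k + 1 \<le> 2 * p" "p \<le> a + b" "p \<le> k - a - 1" "3 * p \<le> 2 * k" "2 * p \<le> b + k"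
    by (rule Q1_memE)
  note facts = assms p
  have "(a - 1, b + 2) \<in> fusionR k (a, b) (i, j)" unfolding ij
    by (rule mem_fusionR_if_integral_bounds[where A = "a + b + k - p + 1" and B = "a + b + p"])
      (use facts in \<open>auto simp: Pplus_def calA_def calB_def field_simps\<close>)
  moreover have "(a - 2, b + 1) \<in> fusionR k (a, b) (i, j)" unfolding ij
    by (rule mem_fusionR_if_integral_bounds[where A = "a + b + k - p" and B = "a + b + p - 1"])
      (use facts in \<open>auto simp: Pplus_def calA_def calB_def field_simps\<close>)
  moreover have "(a + 1, b + 1) \<in> fusionR k (a, b) (i, j)" unfolding ij
    by (rule mem_fusionR_if_integral_bounds[where A = "a + b + k - p + 1" and B = "a + b + p + 1"])
      (use facts in \<open>auto simp: Pplus_def calA_def calB_def field_simps\<close>)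
  moreover have "(a - 1, b - 1) \<in> fusionR k (a, b) (i, j)"
    if "b \<ge> \<lceil>of_int a / (2::rat)\<rceil> + 2" "k \<le> a + 2 * b - 1"
  proof -
    have "a \<le> 2 * b - 4"
      using that(1) ceiling_divide_le_iff[where d = 2 and x = a and p = "b - 2"] by simp
    then show ?thesis unfolding ij
      by (rule_tac mem_fusionR_if_integral_bounds[where A = "a + b + k - p - 1" and B = "a + b + p - 1"])
        (use facts that(2) in \<open>auto simp: Pplus_def calA_def calB_def field_simps\<close>)
  qed
  ultimately show "(a - 1, b + 2) \<in> fusionR k (a, b) (i, j) \<and>
      (a - 2, b + 1) \<in> fusionR k (a, b) (i, j) \<and>
      (a + 1, b + 1) \<in> fusionR k (a, b) (i, j) \<and>
      (b \<ge> \<lceil>of_int a / (2::rat)\<rceil> + 2 \<and> 2*a + 3 \<le> k \<and> k \<le> a + 2*b - 1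
         \<longrightarrow> (a - 1, b - 1) \<in> fusionR k (a, b) (i, j))"
    by blast
qed

end
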